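(* Let $f:\mathbb{R}^2\to\mathbb{R}^2$ be a Topologically Anosov homeomorphism and $z_0\in\mathrm{Fix}(f)$. If there exists $z\in\mathbb{R}^2$ with $\alpha(z)=\emptyset$ and $\omega(z)=\{z_0\}$, then $z_0$ is Lyapunov stable.
   Context: A homeomorphism $f:\mathbb{R}^2\to\mathbb{R}^2$ is Topologically Anosov (TA) if: (i) there is a continuous strictly positive $\epsilon:\mathbb{R}^2\to\mathbb{R}$ such that for all $x\neq y$ there is $k\in\mathbb{Z}$ with $\|f^k(x)-f^k(y)\|>\epsilon(f^k(x))$; and (ii) for every continuous strictly positive $\epsilon$ there is a continuous strictly positive $\delta$ such that every $\delta$-pseudo-orbit is $\epsilon$-shadowed by an orbit. A $\delta$-pseudo-orbit is a sequence $(x_n)_{n\in\mathbb{Z}}$ with $\|f(x_n)-x_{n+1}\|<\delta(f(x_n))$; it is $\epsilon$-shadowed by the orbit of $x$ if $\|x_n-f^n(x)\|<\epsilon(x_n)$ for all $n$. $z_0$ is Lyapunov stable if for every $\epsilon>0$ there is $\delta>0$ with $f^n(B(z_0,\delta))\subset B(z_0,\epsilon)$ for all $n\geq0$. *)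

theory Defs
  imports "HOL-Analysis.Analysis"
begin

type_synonym R2 = "real ^ 2"

definition iter_int :: "(R2 \<Rightarrow> R2) \<Rightarrow> int \<Rightarrow> R2 \<Rightarrow> R2" where
  "iter_int f k x = (if k \<ge> 0 then (f ^^ nat k) x else (inv f ^^ nat (- k)) x)"

definition pos_cont_fun :: "(R2 \<Rightarrow> real) \<Rightarrow> bool" where
  "pos_cont_fun e \<longleftrightarrow> continuous_on UNIV e \<and> (\<forall>x. e x > 0)"

definition pseudo_orbit :: "(R2 \<Rightarrow> R2) \<Rightarrow> (R2 \<Rightarrow> real) \<Rightarrow> (int \<Rightarrow> R2) \<Rightarrow> bool" where
  "pseudo_orbit f \<delta> xs \<longleftrightarrow> (\<forall>n. norm (f (xs n) - xs (n + 1)) < \<delta> (f (xs n)))"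

definition shadows :: "(R2 \<Rightarrow> R2) \<Rightarrow> (R2 \<Rightarrow> real) \<Rightarrow> R2 \<Rightarrow> (int \<Rightarrow> R2) \<Rightarrow> bool" where
  "shadows f \<epsilon> x xs \<longleftrightarrow> (\<forall>n. norm (xs n - iter_int f n x) < \<epsilon> (xs n))"

definition topologically_anosov :: "(R2 \<Rightarrow> R2) \<Rightarrow> bool" where
  "topologically_anosov f \<longleftrightarrow>
     (\<exists>g. homeomorphism UNIV UNIV f g) \<and>
     (\<exists>\<epsilon>. pos_cont_fun \<epsilon> \<and>
        (\<forall>x y. x \<noteq> y \<longrightarrow> (\<exists>k::int. norm (iter_int f k x - iter_int f k y) > \<epsilon> (iter_int f k x)))) \<and>
     (\<forall>\<epsilon>. pos_cont_fun \<epsilon> \<longrightarrow>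
        (\<exists>\<delta>. pos_cont_fun \<delta> \<and>
           (\<forall>xs. pseudo_orbit f \<delta> xs \<longrightarrow> (\<exists>x. shadows f \<epsilon> x xs))))"

definition omega_limit :: "(R2 \<Rightarrow> R2) \<Rightarrow> R2 \<Rightarrow> R2 set" where
  "omega_limit f z = {y. \<exists>r::nat \<Rightarrow> nat. strict_mono r \<and> (\<lambda>k. (f ^^ r k) z) \<longlonglongrightarrow> y}"

definition alpha_limit :: "(R2 \<Rightarrow> R2) \<Rightarrow> R2 \<Rightarrow> R2 set" where
  "alpha_limit f z = {y. \<exists>r::nat \<Rightarrow> nat. strict_mono r \<and> (\<lambda>k. (inv f ^^ r k) z) \<longlonglongrightarrow> y}"

definition lyapunov_stable :: "(R2 \<Rightarrow> R2) \<Rightarrow> R2 \<Rightarrow> bool" where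
  "lyapunov_stable f z0 \<longleftrightarrow>
     (\<forall>\<epsilon>>0. \<exists>\<delta>>0. \<forall>n::nat. (f ^^ n) ` ball z0 \<delta> \<subseteq> ball z0 \<epsilon>)"

end

(*
  Since alpha(z) is empty, the backward orbit of z leaves every compact set, and this lets one
  choose a continuous tolerance eps so small that no orbit other than that of z eps-follows the
  backward orbit of z. Take delta for eps from the shadowing property and a time m at which the
  orbit of z is very close to z0. For p near z0, the backward orbit of z up to time m followed by
  the forward orbit of p is a delta-pseudo-orbit; its shadowing orbit follows the backward orbit
  of z, hence is the orbit of z. So the forward orbit of p stays eps-close to the orbit of z from
  time m + 1 on, and so does the (constant) orbit of z0; hence the orbit of p stays near z0.
*)
theory Submission
  imports Defs
begin

lemma iter_int_of_nat [simp]: "iter_int f (int k) = f ^^ k"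
  by (simp add: iter_int_def fun_eq_iff)

lemma iter_int_uminus_of_nat [simp]: "iter_int f (- int k) = inv f ^^ k"
  by (simp add: iter_int_def fun_eq_iff)

lemma iter_int_neg: "n \<le> 0 \<Longrightarrow> iter_int f n x = (inv f ^^ nat (- n)) x"
  by (simp add: iter_int_def)

lemma iter_int_add_one:
  assumes "surj f"
  shows "f (iter_int f n x) = iter_int f (n + 1) x"
proof (cases "n \<ge> 0")
  case True
  then have "nat (n + 1) = Suc (nat n)" by simp
  with True show ?thesis by (simp add: iter_int_def)
next
  case False
  then have "nat (- n) = Suc (nat (- (n + 1)))" by simp
  then have "iter_int f n x = inv f ((inv f ^^ nat (- (n + 1))) x)"
    using False by (simp add: iter_int_neg)
  then show ?thesis
    using False assms by (simp add: iter_int_neg surj_f_inv_f)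
qed

lemma continuous_on_funpow:
  fixes h :: "'a::topological_space \<Rightarrow> 'a"
  assumes "continuous_on UNIV h"
  shows "continuous_on UNIV (h ^^ k)"
proof (induction k)
  case (Suc k)
  then show ?case
    using continuous_on_compose[OF Suc.IH continuous_on_subset[of UNIV h]] assms by simp
qed (simp add: continuous_on_id)

lemma compact_positive_lower_bound:
  fixes \<phi> :: "'a::topological_space \<Rightarrow> real"
  assumes "compact S" "continuous_on S \<phi>" "\<And>y. y \<in> S \<Longrightarrow> 0 < \<phi> y"
  shows "\<exists>c>0. \<forall>y\<in>S. c \<le> \<phi> y"
proof (cases "S = {}")
  case False
  then obtain x where "x \<in> S" "\<forall>y\<in>S. \<phi> x \<le> \<phi> y"
    using continuous_attains_inf[OF assms(1) _ assms(2)] by blast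
  with assms(3) show ?thesis by blast
qed (auto intro: exI[of _ 1])

lemma eventually_far_without_convergent_subseq:
  fixes x :: "nat \<Rightarrow> 'a::heine_borel"
  assumes "\<And>r l. strict_mono r \<Longrightarrow> \<not> (x \<circ> r) \<longlonglongrightarrow> l"
  shows "eventually (\<lambda>k. R \<le> dist p (x k)) sequentially"
proof (rule ccontr)
  assume "\<not> ?thesis"
  then have "frequently (\<lambda>k. x k \<in> cball p R) sequentially"
    by (auto simp: not_eventually not_le elim!: frequently_elim1)
  then have "infinite {k. x k \<in> cball p R}"
    unfolding frequently_cofinite[symmetric] cofinite_eq_sequentially .
  then obtain r :: "nat \<Rightarrow> nat" where r: "strict_mono r" "\<And>n. x (r n) \<in> cball p R"
    using infinite_enumerate by blast
  then have "bounded (range (x \<circ> r))"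
    by (intro bounded_subset[OF bounded_cball]) auto
  then obtain l s where "strict_mono s" "((x \<circ> r) \<circ> s) \<longlonglongrightarrow> l"
    using bounded_imp_convergent_subsequence by blast
  with r(1) assms[of "r \<circ> s" l] show False
    by (simp add: strict_mono_o o_assoc)
qed

lemma alpha_limit_empty_escapes:
  assumes "alpha_limit f z = {}"
  shows "eventually (\<lambda>k. R \<le> dist p ((inv f ^^ k) z)) sequentially"
  using assms
  by (intro eventually_far_without_convergent_subseq) (auto simp: alpha_limit_def comp_def)

lemma omega_limit_visits:
  assumes "y \<in> omega_limit f z" "0 < s"
  shows "\<exists>m. dist ((f ^^ Suc m) z) y < s"
proof -
  obtain r where r: "strict_mono r" "(\<lambda>k. (f ^^ r k) z) \<longlonglongrightarrow> y"
    using assms(1) unfolding omega_limit_def by blast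
  then obtain N where N: "\<And>k. N \<le> k \<Longrightarrow> dist ((f ^^ r k) z) y < s"
    using tendstoD[OF r(2) assms(2)] unfolding eventually_sequentially by blast
  have "Suc N \<le> r (Suc N)" using r(1) by (rule seq_suble)
  then have "Suc (r (Suc N) - 1) = r (Suc N)" by simp
  with N[of "Suc N"] show ?thesis by (intro exI[of _ "r (Suc N) - 1"]) simp
qed

text \<open>The infimum of the 1-Lipschitz functions c k + dist p (q k) is 1-Lipschitz, and it is
  positive because near any point only finitely many terms can fall below 1.\<close>
lemma continuous_positive_below_escaping_sequence:
  fixes q :: "nat \<Rightarrow> 'a::metric_space" and c :: "nat \<Rightarrow> real"
  assumes esc: "\<And>p. eventually (\<lambda>k. 1 \<le> dist p (q k)) sequentially"
    and c: "\<And>k. 0 < c k"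
  shows "\<exists>\<epsilon>. continuous_on UNIV \<epsilon> \<and> (\<forall>x. 0 < \<epsilon> x) \<and> (\<forall>k. \<epsilon> (q k) \<le> c k)"
proof -
  define F where "F p = (INF k. c k + dist p (q k))" for p
  have bdd: "bdd_below (range (\<lambda>k. c k + dist p (q k)))" for p
    by (rule bdd_belowI2[of _ 0]) (simp add: add_nonneg_nonneg less_imp_le c)
  have F_le: "F p \<le> c k + dist p (q k)" for p k
    unfolding F_def by (rule cINF_lower[OF bdd]) simp
  have F_lip: "F p - dist p p' \<le> F p'" for p p'
    unfolding F_def[of p']
  proof (rule cINF_greatest)
    fix k
    show "F p - dist p p' \<le> c k + dist p' (q k)"
      using F_le[of p k] dist_triangle[of p "q k" p'] by simp
  qed simp
  have "1-lipschitz_on UNIV F"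
  proof (rule lipschitz_onI)
    fix x y
    show "dist (F x) (F y) \<le> 1 * dist x y"
      using F_lip[of x y] F_lip[of y x] by (simp add: dist_real_def dist_commute abs_le_iff)
  qed simp
  then have "continuous_on UNIV F"
    by (rule lipschitz_on_continuous_on)
  moreover have "0 < F p" for p
  proof -
    obtain K where K: "\<And>k. K \<le> k \<Longrightarrow> 1 \<le> dist p (q k)"
      using esc[of p] unfolding eventually_sequentially by blast
    define L where "L = Min (insert 1 (c ` {..<K}))"
    have "0 < L" unfolding L_def using c by (simp add: Min_gr_iff)
    also have "L \<le> F p" unfolding F_def
    proof (rule cINF_greatest)
      fix k
      show "L \<le> c k + dist p (q k)"
      proof (cases "k < K")
        case True
        then have "L \<le> c k" unfolding L_def by (intro Min_le) auto
        then show ?thesis by (simp add: add_increasing2)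
      next
        case False
        then have "L \<le> 1" "1 \<le> dist p (q k)" using K unfolding L_def by (auto intro: Min_le)
        then show ?thesis using c[of k] by simp
      qed
    qed simp
    finally show ?thesis .
  qed
  moreover have "F (q k) \<le> c k" for k
    using F_le[of "q k" k] by simp
  ultimately show ?thesis by blast
qed

lemma annulus_index:
  fixes d r :: real
  assumes "0 < d" "d < r"
  shows "\<exists>k::nat. r / (real k + 2) \<le> d \<and> d \<le> r / (real k + 1)"
proof -
  define k where "k = nat (\<lfloor>r / d\<rfloor> - 1)"
  have "1 < r / d" using assms by simp
  then have "real k + 1 \<le> r / d" "r / d < real k + 2"
    unfolding k_def by linarith+
  with assms show ?thesis
    by (intro exI[of _ k]) (simp add: field_simps)
qed

text \<open>At h ^^ k z the tolerance is pushed below the least displacement that h ^^ k gives to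
  the points of the compact annulus A k; these annuli cover a punctured neighbourhood of z.\<close>
lemma escaping_orbit_followed_only_by_itself:
  fixes h :: "R2 \<Rightarrow> R2"
  assumes "continuous_on UNIV h" "inj h"
    and esc: "\<And>p. eventually (\<lambda>k. 1 \<le> dist p ((h ^^ k) z)) sequentially"
    and "0 < r"
  shows "\<exists>\<epsilon>. pos_cont_fun \<epsilon> \<and> (\<forall>x. \<epsilon> x \<le> r) \<and>
    (\<forall>y. (\<forall>k. norm ((h ^^ k) z - (h ^^ k) y) < \<epsilon> ((h ^^ k) z)) \<longrightarrow> y = z)"
proof -
  define A where "A k = cball z (r / (real k + 1)) - ball z (r / (real k + 2))" for k :: nat
  have "\<exists>c>0. \<forall>y\<in>A k. c \<le> norm ((h ^^ k) y - (h ^^ k) z)" for k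
  proof (rule compact_positive_lower_bound)
    show "compact (A k)" unfolding A_def by (intro compact_diff) auto
    have "continuous_on (A k) (h ^^ k)"
      using continuous_on_funpow[OF assms(1)] by (rule continuous_on_subset) simp
    then show "continuous_on (A k) (\<lambda>y. norm ((h ^^ k) y - (h ^^ k) z))"
      by (intro continuous_on_norm continuous_on_diff continuous_on_const)
    fix y assume "y \<in> A k"
    then have "y \<noteq> z" unfolding A_def using \<open>0 < r\<close> by auto
    then show "0 < norm ((h ^^ k) y - (h ^^ k) z)"
      using inj_fn[OF assms(2)] by (simp add: inj_eq)
  qed
  then obtain c where c: "\<And>k. 0 < c k"
    and c_le: "\<And>k y. y \<in> A k \<Longrightarrow> c k \<le> norm ((h ^^ k) y - (h ^^ k) z)"
    by metis
  obtain F where F: "continuous_on UNIV F" "\<And>x. 0 < F x" "\<And>k. F ((h ^^ k) z) \<le> c k"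
    using continuous_positive_below_escaping_sequence[where c = c, OF esc c] by blast
  define \<epsilon> where "\<epsilon> x = min r (F x)" for x
  have "pos_cont_fun \<epsilon>"
    unfolding pos_cont_fun_def \<epsilon>_def using F \<open>0 < r\<close> by (auto intro!: continuous_intros)
  moreover have "y = z" if follows: "\<forall>k. norm ((h ^^ k) z - (h ^^ k) y) < \<epsilon> ((h ^^ k) z)" for y
  proof (rule ccontr)
    assume "y \<noteq> z"
    moreover have "dist z y < r" using follows[rule_format, of 0] by (simp add: \<epsilon>_def dist_norm)
    ultimately obtain k where "r / (real k + 2) \<le> dist z y" "dist z y \<le> r / (real k + 1)"
      using annulus_index[of "dist z y" r] by auto
    then have "y \<in> A k" unfolding A_def by simp
    then have "c k \<le> norm ((h ^^ k) z - (h ^^ k) y)" by (metis c_le norm_minus_commute)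
    also have "\<dots> < \<epsilon> ((h ^^ k) z)" using follows by blast
    also have "\<dots> \<le> c k" using F(3)[of k] by (simp add: \<epsilon>_def)
    finally show False by simp
  qed
  ultimately show ?thesis by (auto simp: \<epsilon>_def)
qed

definition jump_orbit :: "(R2 \<Rightarrow> R2) \<Rightarrow> R2 \<Rightarrow> nat \<Rightarrow> R2 \<Rightarrow> int \<Rightarrow> R2" where
  "jump_orbit f x m p n = (if n \<le> int m then iter_int f n x else (f ^^ nat (n - int m - 1)) p)"

lemma jump_orbit_past: "jump_orbit f x m p (- int k) = (inv f ^^ k) x"
  by (simp add: jump_orbit_def)

lemma jump_orbit_future: "jump_orbit f x m p (int (Suc m + j)) = (f ^^ j) p"
  by (simp add: jump_orbit_def)

lemma pseudo_orbit_jump_orbit: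
  assumes "surj f" "pos_cont_fun \<delta>" "norm ((f ^^ Suc m) x - p) < \<delta> ((f ^^ Suc m) x)"
  shows "pseudo_orbit f \<delta> (jump_orbit f x m p)"
  unfolding pseudo_orbit_def
proof
  fix n :: int
  have "f (jump_orbit f x m p n) = jump_orbit f x m p (n + 1)" if "n \<noteq> int m"
  proof (cases "n < int m")
    case True
    then show ?thesis by (simp add: jump_orbit_def iter_int_add_one[OF assms(1)])
  next
    case False
    with that have "\<not> n \<le> int m" "\<not> n + 1 \<le> int m"
      "nat (n + 1 - int m - 1) = Suc (nat (n - int m - 1))"
      by auto
    then show ?thesis by (simp add: jump_orbit_def)
  qed
  moreover have "f (jump_orbit f x m p (int m)) = (f ^^ Suc m) x" "jump_orbit f x m p (int m + 1) = p"
    by (simp_all add: jump_orbit_def)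
  ultimately show
    "norm (f (jump_orbit f x m p n) - jump_orbit f x m p (n + 1)) < \<delta> (f (jump_orbit f x m p n))"
    using assms(2,3) unfolding pos_cont_fun_def by (cases "n = int m") auto
qed

lemma pos_cont_fun_small_jumps_near:
  assumes "pos_cont_fun \<delta>"
  shows "\<exists>s>0. \<forall>x p. dist x a < s \<longrightarrow> dist p a < s \<longrightarrow> norm (x - p) < \<delta> x"
proof -
  have "0 < \<delta> a" "continuous_on UNIV \<delta>" using assms unfolding pos_cont_fun_def by auto
  then obtain \<rho> where "0 < \<rho>" and \<rho>: "\<And>x. dist x a < \<rho> \<Longrightarrow> dist (\<delta> x) (\<delta> a) < \<delta> a / 2"
    unfolding continuous_on_iff by (metis UNIV_I half_gt_zero)
  show ?thesis
  proof (intro exI conjI allI impI)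
    show "0 < min \<rho> (\<delta> a / 4)" using \<open>0 < \<rho>\<close> \<open>0 < \<delta> a\<close> by simp
    fix x p assume x: "dist x a < min \<rho> (\<delta> a / 4)" and p: "dist p a < min \<rho> (\<delta> a / 4)"
    have "norm (x - p) \<le> dist x a + dist p a" by (metis dist_norm dist_triangle2)
    also have "\<dots> < \<delta> a / 2" using x p by simp
    also have "\<dots> < \<delta> x" using \<rho>[of x] x unfolding dist_real_def by arith
    finally show "norm (x - p) < \<delta> x" .
  qed
qed

lemma topologically_anosov_inv:
  assumes "topologically_anosov f"
  shows "bij f" "continuous_on UNIV (inv f)"
proof -
  obtain g where "homeomorphism UNIV UNIV f g"
    using assms unfolding topologically_anosov_def by blast
  then have "f \<circ> g = id" "g \<circ> f = id" "continuous_on UNIV g"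
    unfolding homeomorphism_def by (auto simp: fun_eq_iff)
  then show "bij f" "continuous_on UNIV (inv f)"
    using inv_unique_comp[of f g] o_bij by auto
qed

lemma near_points_follow_escaping_orbit:
  assumes "topologically_anosov f" "alpha_limit f z = {}" "0 < \<eta>"
  shows "\<exists>s>0. \<forall>m p j. dist ((f ^^ Suc m) z) a < s \<longrightarrow> dist p a < s \<longrightarrow>
    dist ((f ^^ j) p) ((f ^^ (Suc m + j)) z) < \<eta>"
proof -
  have "bij f" "continuous_on UNIV (inv f)"
    using topologically_anosov_inv[OF assms(1)] by auto
  obtain \<epsilon> where \<epsilon>: "pos_cont_fun \<epsilon>" "\<And>x. \<epsilon> x \<le> \<eta>"
    and unique:
      "\<And>y. \<forall>k. norm ((inv f ^^ k) z - (inv f ^^ k) y) < \<epsilon> ((inv f ^^ k) z) \<Longrightarrow> y = z"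
    using escaping_orbit_followed_only_by_itself[OF \<open>continuous_on UNIV (inv f)\<close>
        bij_is_inj[OF bij_imp_bij_inv[OF \<open>bij f\<close>]] alpha_limit_empty_escapes[OF assms(2)]
        assms(3)]
    by blast
  obtain \<delta> where "pos_cont_fun \<delta>"
    and shadowing: "\<And>xs. pseudo_orbit f \<delta> xs \<Longrightarrow> \<exists>y. shadows f \<epsilon> y xs"
    using assms(1) \<epsilon>(1) unfolding topologically_anosov_def by blast
  obtain s where "0 < s" and s: "\<And>x p. dist x a < s \<Longrightarrow> dist p a < s \<Longrightarrow> norm (x - p) < \<delta> x"
    using pos_cont_fun_small_jumps_near[OF \<open>pos_cont_fun \<delta>\<close>] by blast
  have "dist ((f ^^ j) p) ((f ^^ (Suc m + j)) z) < \<eta>"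
    if "dist ((f ^^ Suc m) z) a < s" "dist p a < s" for m p j
  proof -
    have "pseudo_orbit f \<delta> (jump_orbit f z m p)"
      by (rule pseudo_orbit_jump_orbit[OF bij_is_surj[OF \<open>bij f\<close>] \<open>pos_cont_fun \<delta>\<close> s[OF that]])
    then obtain y
      where y: "\<And>n. norm (jump_orbit f z m p n - iter_int f n y) < \<epsilon> (jump_orbit f z m p n)"
      using shadowing unfolding shadows_def by blast
    have "norm ((inv f ^^ k) z - (inv f ^^ k) y) < \<epsilon> ((inv f ^^ k) z)" for k
      using y[of "- int k"] unfolding jump_orbit_past iter_int_uminus_of_nat .
    then have "y = z" by (intro unique) blast
    moreover have "norm ((f ^^ j) p - (f ^^ (Suc m + j)) y) < \<epsilon> ((f ^^ j) p)"
      using y[of "int (Suc m + j)"] unfolding jump_orbit_future iter_int_of_nat .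
    ultimately show ?thesis
      using \<epsilon>(2)[of "(f ^^ j) p"] by (simp add: dist_norm)
  qed
  with \<open>0 < s\<close> show ?thesis by blast
qed

theorem mainTheorem11:
  fixes f :: "R2 \<Rightarrow> R2" and z0 z :: R2
  assumes "topologically_anosov f"
    and "f z0 = z0"
    and "alpha_limit f z = {}"
    and "omega_limit f z = {z0}"
  shows "lyapunov_stable f z0"
  unfolding lyapunov_stable_def
proof (intro allI impI)
  fix \<eta> :: real assume "0 < \<eta>"
  then obtain s where "0 < s"
    and follow: "\<And>m p j. dist ((f ^^ Suc m) z) z0 < s \<Longrightarrow> dist p z0 < s \<Longrightarrow>
      dist ((f ^^ j) p) ((f ^^ (Suc m + j)) z) < \<eta> / 2"
    using near_points_follow_escaping_orbit[OF assms(1,3), of "\<eta> / 2" z0] by auto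
  obtain m where m: "dist ((f ^^ Suc m) z) z0 < s"
    using omega_limit_visits[of z0 f z s] assms(4) \<open>0 < s\<close> by auto
  have "(f ^^ j) z0 = z0" for j
    using assms(2) by (induction j) auto
  then have z0_follows: "dist z0 ((f ^^ (Suc m + j)) z) < \<eta> / 2" for j
    using follow[OF m, of z0 j] \<open>0 < s\<close> by simp
  have "dist ((f ^^ j) p) z0 < \<eta>" if "dist p z0 < s" for p j
    by (rule dist_triangle_half_l[OF follow[OF m that] z0_follows])
  then have "(f ^^ n) ` ball z0 s \<subseteq> ball z0 \<eta>" for n
    by (auto simp: dist_commute)
  with \<open>0 < s\<close> show "\<exists>\<delta>>0. \<forall>n. (f ^^ n) ` ball z0 \<delta> \<subseteq> ball z0 \<eta>"
    by blast
qed

end
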